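(* Let $f:[0,1]^n\to[0,1]$ be implementable by a Bernoulli factory, and suppose that for some open face $F_{A,S,B}$ of the hypercube we have $f|_{F_{A,S,B}}\not\equiv 0$. Then there exist an integer $m\ge 0$ and a constant $c>0$ such that $f(p)\ge c\left((1-p)^A\, p^S(1-p)^S\, p^B\right)^m$ for all $p\in[0,1]^n$.
   Context: A (multiparameter) Bernoulli factory with input $(p_1,\dots,p_n)$ is a (possibly infinite) rooted binary tree in which every node has either $2$ children or $0$ children (leaf). Each internal node is labelled either by an index $i\in[n]$ or by a constant $c\in(0,1)$; each leaf is labelled $0$ or $1$. To execute it with coins $p\in[0,1]^n$, start at the root; at a node labelled $i$ draw a fresh independent Bernoulli($p_i$) sample, at a node labelled $c$ a fresh independent Bernoulli($c$) sample; move to the child corresponding to the outcome; upon reaching a leaf output its label. $f$ is implementable by a Bernoulli factory if there is such a tree which, for every $p\in[0,1]^n$, reaches a leaf almost surely and outputs $1$ with probability exactly $f(p)$. For a partition $[n]=A\sqcup S\sqcup B$, the open face is $F_{A,S,B}=\{p\in[0,1]^n: p_i=0\ (i\in A),\ 0<p_i<1\ (i\in S),\ p_i=1\ (i\in B)\}$. For $T\subseteq[n]$, $p^T=\prod_{i\in T}p_i$, $(1-p)^T=\prod_{i\in T}(1-p_i)$. $f|_X\equiv 0$ means $f$ vanishes on all of $X$. *)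

theory Defs
  imports "HOL-Analysis.Analysis"
begin

text \<open>Coins are indexed 0..n-1 (for [n]).
  For an internal node, the child reached on outcome 1 is addressed by appending True,
  on outcome 0 by appending False. A (possibly infinite) rooted binary tree is encoded as
  a labelling of all finite binary addresses; addresses below a leaf are irrelevant.\<close>
datatype node = Coin nat | Const real | Leaf bool

type_synonym tree = "bool list \<Rightarrow> node"

definition is_leaf :: "node \<Rightarrow> bool" where
  "is_leaf x \<longleftrightarrow> (\<exists>b. x = Leaf b)"

definition wf_tree :: "nat \<Rightarrow> tree \<Rightarrow> bool" where
  "wf_tree n t \<longleftrightarrow> (\<forall>w. (\<forall>i. t w = Coin i \<longrightarrow> i < n) \<and> (\<forall>c. t w = Const c \<longrightarrow> 0 < c \<and> c < 1))"

definition reachable :: "tree \<Rightarrow> bool list \<Rightarrow> bool" where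
  "reachable t w \<longleftrightarrow> (\<forall>k < length w. \<not> is_leaf (t (take k w)))"

fun step_prob :: "(nat \<Rightarrow> real) \<Rightarrow> node \<Rightarrow> bool \<Rightarrow> real" where
  "step_prob p (Coin i) b = (if b then p i else 1 - p i)"
| "step_prob p (Const c) b = (if b then c else 1 - c)"
| "step_prob p (Leaf _) b = 0"

definition path_prob :: "tree \<Rightarrow> (nat \<Rightarrow> real) \<Rightarrow> bool list \<Rightarrow> real" where
  "path_prob t p w = (\<Prod>k<length w. step_prob p (t (take k w)) (w ! k))"

definition cube :: "nat \<Rightarrow> (nat \<Rightarrow> real) set" where
  "cube n = {p. \<forall>i<n. 0 \<le> p i \<and> p i \<le> 1}"

definition implements :: "nat \<Rightarrow> tree \<Rightarrow> ((nat \<Rightarrow> real) \<Rightarrow> real) \<Rightarrow> bool" where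
  "implements n t f \<longleftrightarrow> wf_tree n t \<and>
     (\<forall>p \<in> cube n.
        (path_prob t p has_sum 1) {w. reachable t w \<and> is_leaf (t w)} \<and>
        (path_prob t p has_sum f p) {w. reachable t w \<and> t w = Leaf True})"

definition bernoulli_factory_implementable :: "nat \<Rightarrow> ((nat \<Rightarrow> real) \<Rightarrow> real) \<Rightarrow> bool" where
  "bernoulli_factory_implementable n f \<longleftrightarrow> (\<exists>t. implements n t f)"

definition open_face :: "nat set \<Rightarrow> nat set \<Rightarrow> nat set \<Rightarrow> (nat \<Rightarrow> real) set" where
  "open_face A S B = {p. (\<forall>i\<in>A. p i = 0) \<and> (\<forall>i\<in>S. 0 < p i \<and> p i < 1) \<and> (\<forall>i\<in>B. p i = 1)}"

end

theory Submission
  imports Defs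
begin

text \<open>Since f(p0) \<noteq> 0 for some p0 in the face, some accepting leaf w is reached with positive
  probability at p0. Along w, a coin i is only ever read as 1 if p0 i \<noteq> 0, i.e. i \<notin> A, and as 0
  only if p0 i \<noteq> 1, i.e. i \<notin> B. Hence every coin step of w has probability at least the face
  weight (1-p)^A p^S (1-p)^S p^B at any p, while constant steps contribute fixed positive factors.
  So f(p) \<ge> Pr[w] \<ge> c \<cdot> (face weight)^|w|.\<close>

definition face_weight :: "nat set \<Rightarrow> nat set \<Rightarrow> nat set \<Rightarrow> (nat \<Rightarrow> real) \<Rightarrow> real" where
  "face_weight A S B p = (\<Prod>i\<in>A. 1 - p i) * (\<Prod>i\<in>S. p i) * (\<Prod>i\<in>S. 1 - p i) * (\<Prod>i\<in>B. p i)"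

lemma prod_le_factor:
  fixes g :: "'a \<Rightarrow> 'b::linordered_semidom"
  assumes "finite X" "\<And>j. j \<in> X \<Longrightarrow> 0 \<le> g j \<and> g j \<le> 1" "i \<in> X"
  shows "prod g X \<le> g i"
proof -
  have "prod g X = g i * prod g (X - {i})"
    using assms by (simp add: prod.remove)
  also have "\<dots> \<le> g i"
    using assms by (intro mult_left_le prod_nonneg prod_le_1) auto
  finally show ?thesis .
qed

lemma face_weight_bounds:
  assumes "A \<union> S \<union> B \<subseteq> {..<n}" "p \<in> cube n"
  shows face_weight_nonneg: "0 \<le> face_weight A S B p"
    and face_weight_le_one_minus: "i \<in> A \<union> S \<Longrightarrow> face_weight A S B p \<le> 1 - p i"
    and face_weight_le_coin: "i \<in> S \<union> B \<Longrightarrow> face_weight A S B p \<le> p i"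
    and face_weight_le_one: "face_weight A S B p \<le> 1"
proof -
  have fin: "finite A" "finite S" "finite B"
    using assms(1) finite_subset by blast+
  have unit: "0 \<le> p i \<and> p i \<le> 1" if "i \<in> A \<union> S \<union> B" for i
    using assms that unfolding cube_def by auto
  define a where "a = (\<Prod>i\<in>A. 1 - p i)"
  define b where "b = (\<Prod>i\<in>S. p i)"
  define c where "c = (\<Prod>i\<in>S. 1 - p i)"
  define d where "d = (\<Prod>i\<in>B. p i)"
  have "0 \<le> a" "a \<le> 1" "0 \<le> b" "b \<le> 1" "0 \<le> c" "c \<le> 1" "0 \<le> d" "d \<le> 1"
    unfolding a_def b_def c_def d_def using unit by (auto intro!: prod_nonneg prod_le_1)
  then have abcd: "0 \<le> a * b * c * d" "a * b * c * d \<le> a" "a * b * c * d \<le> b"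
      "a * b * c * d \<le> c" "a * b * c * d \<le> d"
    by (auto intro: order_trans[OF mult_right_le_one_le] order_trans[OF mult_left_le_one_le]
        mult_nonneg_nonneg mult_le_one)
  have fw: "face_weight A S B p = a * b * c * d"
    unfolding face_weight_def a_def b_def c_def d_def ..
  show "0 \<le> face_weight A S B p"
    using abcd fw by simp
  show "face_weight A S B p \<le> 1 - p i" if "i \<in> A \<union> S"
  proof -
    have "a \<le> 1 - p i" if "i \<in> A"
      unfolding a_def using that fin unit by (intro prod_le_factor) auto
    moreover have "c \<le> 1 - p i" if "i \<in> S"
      unfolding c_def using that fin unit by (intro prod_le_factor) auto
    ultimately show ?thesis using \<open>i \<in> A \<union> S\<close> abcd fw by auto
  qed
  show "face_weight A S B p \<le> p i" if "i \<in> S \<union> B"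
  proof -
    have "b \<le> p i" if "i \<in> S"
      unfolding b_def using that fin unit by (intro prod_le_factor) auto
    moreover have "d \<le> p i" if "i \<in> B"
      unfolding d_def using that fin unit by (intro prod_le_factor) auto
    ultimately show ?thesis using \<open>i \<in> S \<union> B\<close> abcd fw by auto
  qed
  show "face_weight A S B p \<le> 1"
    using abcd fw \<open>a \<le> 1\<close> by simp
qed

lemma step_prob_nonneg:
  assumes "wf_tree n t" "p \<in> cube n"
  shows "0 \<le> step_prob p (t v) b"
proof (cases "t v")
  case (Coin i)
  then have "i < n" using assms(1) unfolding wf_tree_def by auto
  then show ?thesis using assms(2) Coin unfolding cube_def by auto
next
  case (Const c)
  then have "0 < c \<and> c < 1" using assms(1) unfolding wf_tree_def by blast
  then show ?thesis using Const by auto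
qed auto

lemma path_prob_nonneg:
  assumes "wf_tree n t" "p \<in> cube n"
  shows "0 \<le> path_prob t p w"
  unfolding path_prob_def using assms by (intro prod_nonneg) (auto intro: step_prob_nonneg)

lemma accepting_path_prob_le:
  assumes "implements n t f" "p \<in> cube n" "reachable t w" "t w = Leaf True"
  shows "path_prob t p w \<le> f p"
proof -
  have "(path_prob t p has_sum f p) {w. reachable t w \<and> t w = Leaf True}"
    using assms(1,2) unfolding implements_def by blast
  then have "sum (path_prob t p) {w} \<le> f p"
    using assms by (intro finite_sum_le_has_sum path_prob_nonneg) (auto simp: implements_def)
  then show ?thesis by simp
qed

lemma nonzero_obtains_accepting_path:
  assumes "implements n t f" "p \<in> cube n" "f p \<noteq> 0"
  obtains w where "reachable t w" "t w = Leaf True" "path_prob t p w \<noteq> 0"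
proof (rule ccontr)
  assume "\<not> thesis"
  with that have "(path_prob t p has_sum 0) {w. reachable t w \<and> t w = Leaf True}"
    by (intro has_sum_0) blast
  moreover have "(path_prob t p has_sum f p) {w. reachable t w \<and> t w = Leaf True}"
    using assms(1,2) unfolding implements_def by blast
  ultimately show False
    using assms(3) has_sum_unique by blast
qed

lemma step_prob_ge_face_weight:
  assumes "wf_tree n t" "A \<union> S \<union> B = {..<n}" "p0 \<in> open_face A S B"
    and "step_prob p0 (t v) b \<noteq> 0"
  shows "\<exists>a>0. \<forall>p\<in>cube n. a * face_weight A S B p \<le> step_prob p (t v) b"
proof (cases "t v")
  case (Coin i)
  then have "i < n"
    using assms(1) unfolding wf_tree_def by auto
  then have "i \<in> A \<union> S \<union> B"
    using assms(2) by simp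
  have "face_weight A S B p \<le> step_prob p (Coin i) b" if "p \<in> cube n" for p
  proof (cases b)
    case True
    then have "p0 i \<noteq> 0" using assms(4) Coin by simp
    then have "i \<notin> A" using assms(3) unfolding open_face_def by blast
    then have "face_weight A S B p \<le> p i"
      using \<open>i \<in> A \<union> S \<union> B\<close> assms(2) that by (intro face_weight_le_coin) auto
    then show ?thesis using True by simp
  next
    case False
    then have "p0 i \<noteq> 1" using assms(4) Coin by simp
    then have "i \<notin> B" using assms(3) unfolding open_face_def by blast
    then have "face_weight A S B p \<le> 1 - p i"
      using \<open>i \<in> A \<union> S \<union> B\<close> assms(2) that by (intro face_weight_le_one_minus) auto
    then show ?thesis using False by simp
  qed
  then show ?thesis
    unfolding Coin by (intro exI[of _ 1]) simp
next
  case (Const c)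
  then have "0 < c" "c < 1" using assms(1) unfolding wf_tree_def by auto
  then have pos: "0 < step_prob p0 (Const c) b" by simp
  have bound: "step_prob p0 (Const c) b * face_weight A S B p \<le> step_prob p (Const c) b"
    if "p \<in> cube n" for p
  proof -
    have "face_weight A S B p \<le> 1"
      using assms(2) that by (intro face_weight_le_one) auto
    then have "step_prob p0 (Const c) b * face_weight A S B p \<le> step_prob p0 (Const c) b"
      using pos by (intro mult_left_le) auto
    then show ?thesis by simp
  qed
  show ?thesis
    unfolding Const using pos bound by blast
next
  case (Leaf x)
  then show ?thesis using assms(4) by simp
qed

lemma path_prob_ge_face_weight_power:
  assumes "wf_tree n t" "A \<union> S \<union> B = {..<n}" "p0 \<in> open_face A S B"
    and "path_prob t p0 w \<noteq> 0"
  shows "\<exists>c>0. \<forall>p\<in>cube n. c * face_weight A S B p ^ length w \<le> path_prob t p w"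
proof -
  have "\<forall>k<length w. \<exists>a>0. \<forall>p\<in>cube n.
          a * face_weight A S B p \<le> step_prob p (t (take k w)) (w ! k)"
    using assms(4) unfolding path_prob_def
    by (auto intro!: step_prob_ge_face_weight[OF assms(1-3)])
  then obtain a where a: "\<And>k. k < length w \<Longrightarrow> 0 < a k"
    and a_le: "\<And>k p. k < length w \<Longrightarrow> p \<in> cube n \<Longrightarrow>
          a k * face_weight A S B p \<le> step_prob p (t (take k w)) (w ! k)"
    by metis
  show ?thesis
  proof (intro exI[of _ "\<Prod>k<length w. a k"] conjI ballI)
    show "0 < (\<Prod>k<length w. a k)" using a by (auto intro: prod_pos)
    fix p assume p: "p \<in> cube n"
    have "(\<Prod>k<length w. a k) * face_weight A S B p ^ length w
          = (\<Prod>k<length w. a k * face_weight A S B p)"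
      by (simp add: prod.distrib)
    also have "\<dots> \<le> path_prob t p w"
      unfolding path_prob_def
    proof (rule prod_mono)
      fix k assume "k \<in> {..<length w}"
      then show "0 \<le> a k * face_weight A S B p \<and>
          a k * face_weight A S B p \<le> step_prob p (t (take k w)) (w ! k)"
        using a[of k] a_le[OF _ p] face_weight_nonneg[of A S B n p] assms(2) p by simp
    qed
    finally show "(\<Prod>k<length w. a k) * face_weight A S B p ^ length w \<le> path_prob t p w" .
  qed
qed

theorem lemma2:
  fixes n :: nat and f :: "(nat \<Rightarrow> real) \<Rightarrow> real" and A S B :: "nat set"
  assumes "bernoulli_factory_implementable n f"
    and "A \<union> S \<union> B = {..<n}" and "A \<inter> S = {}" and "A \<inter> B = {}" and "S \<inter> B = {}"
    and "\<exists>p \<in> open_face A S B. p \<in> cube n \<and> f p \<noteq> 0"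
  shows "\<exists>m::nat. \<exists>c>0. \<forall>p \<in> cube n.
           f p \<ge> c * ((\<Prod>i\<in>A. 1 - p i) * (\<Prod>i\<in>S. p i) * (\<Prod>i\<in>S. 1 - p i) * (\<Prod>i\<in>B. p i)) ^ m"
proof -
  obtain t where t: "implements n t f"
    using assms(1) unfolding bernoulli_factory_implementable_def by blast
  then have "wf_tree n t"
    unfolding implements_def by blast
  obtain p0 where p0: "p0 \<in> open_face A S B" "p0 \<in> cube n" "f p0 \<noteq> 0"
    using assms(6) by blast
  obtain w where w: "reachable t w" "t w = Leaf True" "path_prob t p0 w \<noteq> 0"
    using nonzero_obtains_accepting_path[OF t p0(2,3)] .
  obtain c where "c > 0"
    and c: "\<forall>p\<in>cube n. c * face_weight A S B p ^ length w \<le> path_prob t p w"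
    using path_prob_ge_face_weight_power[OF \<open>wf_tree n t\<close> assms(2) p0(1) w(3)] by blast
  have "c * face_weight A S B p ^ length w \<le> f p" if "p \<in> cube n" for p
    using c accepting_path_prob_le[OF t that w(1,2)] that by (meson order_trans)
  then show ?thesis
    using \<open>c > 0\<close> unfolding face_weight_def by blast
qed

end
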